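(* Let $r\geq 1$ and $k\geq 2$ be integers, let $G$ be a graph, and let $\mathcal{G}_0$ be the auxiliary graph of $G$ defined below. Let $\mathcal{G}$ be a bipartite subgraph of $\mathcal{G}_0$ on $m$ vertices with parts $X_1,X_2$ such that $d_{\mathcal{G}_0}(x)\leq D_1$ for every $x\in X_1$ and $d_{\mathcal{G}_0}(x)\leq D_2$ for every $x\in X_2$, where $D_1\leq D_2$. Then the number of homomorphic $2k$-cycles $(x_1,\dots,x_{2k})$ in $\mathcal{G}$ such that $x_i\cap x_j\neq\emptyset$ for some $i\neq j$ is at most (i) $32k^{3/2}r^{\frac{r+1}{2}}(D_1^{1-1/r}D_2)^{1/2}m^{\frac{1}{2k}}\hom(C_{2k},\mathcal{G})^{1-\frac{1}{2k}}$, and also at most (ii) $32k^{3/2}r^{\frac{r+1}{2}}(D_1^{1-1/r}D_2)^{1/2}(mD_2)^{\frac{1}{2k-2}}\hom(C_{2k},\mathcal{G})^{1-\frac{1}{2k-2}}$.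
   Context: Given a graph $G$ and a positive integer $r$, the auxiliary graph $\mathcal{G}_0$ has as vertex set the family of all $r$-element subsets of $V(G)$, and two such sets $U,W$ are adjacent in $\mathcal{G}_0$ if $U\cap W=\emptyset$ and $uw\in E(G)$ for all $u\in U$, $w\in W$. A homomorphic $2k$-cycle in a graph $H$ is a tuple $(x_1,\dots,x_{2k})$ of vertices with $x_ix_{i+1}\in E(H)$ for all $i$ (indices mod $2k$); $\hom(C_{2k},H)$ is the number of them. $d_H(x)$ is the degree of $x$ in $H$. *)

theory Defs
  imports "HOL-Library.FuncSet" Complex_Main
begin

definition simple_graph :: "'a set \<Rightarrow> ('a \<Rightarrow> 'a \<Rightarrow> bool) \<Rightarrow> bool" where
  "simple_graph V E \<longleftrightarrow> finite V \<and> (\<forall>u v. E u v \<longrightarrow> u \<in> V \<and> v \<in> V)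
     \<and> (\<forall>u v. E u v \<longrightarrow> E v u) \<and> (\<forall>v. \<not> E v v)"

definition aux_verts :: "'a set \<Rightarrow> nat \<Rightarrow> 'a set set" where
  "aux_verts V r = {U. U \<subseteq> V \<and> card U = r}"

definition aux_adj :: "('a \<Rightarrow> 'a \<Rightarrow> bool) \<Rightarrow> 'a set \<Rightarrow> 'a set \<Rightarrow> bool" where
  "aux_adj E U W \<longleftrightarrow> U \<inter> W = {} \<and> (\<forall>u\<in>U. \<forall>w\<in>W. E u w)"

definition degree :: "'b set \<Rightarrow> ('b \<Rightarrow> 'b \<Rightarrow> bool) \<Rightarrow> 'b \<Rightarrow> nat" where
  "degree V E x = card {y \<in> V. E x y}"

definition hom_cycles :: "nat \<Rightarrow> 'b set \<Rightarrow> ('b \<Rightarrow> 'b \<Rightarrow> bool) \<Rightarrow> (nat \<Rightarrow> 'b) set" where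
  "hom_cycles L V E = {f \<in> {..<L} \<rightarrow>\<^sub>E V. \<forall>i<L. E (f i) (f (Suc i mod L))}"

definition hom_C :: "nat \<Rightarrow> 'b set \<Rightarrow> ('b \<Rightarrow> 'b \<Rightarrow> bool) \<Rightarrow> nat" where
  "hom_C L V E = card (hom_cycles L V E)"

definition subgraph :: "'b set \<Rightarrow> ('b \<Rightarrow> 'b \<Rightarrow> bool) \<Rightarrow> 'b set \<Rightarrow> ('b \<Rightarrow> 'b \<Rightarrow> bool) \<Rightarrow> bool" where
  "subgraph VH EH V E \<longleftrightarrow> VH \<subseteq> V \<and> (\<forall>x y. EH x y \<longrightarrow> x \<in> VH \<and> y \<in> VH \<and> E x y)
     \<and> (\<forall>x y. EH x y \<longrightarrow> EH y x)"

definition bipartite_parts :: "'b set \<Rightarrow> ('b \<Rightarrow> 'b \<Rightarrow> bool) \<Rightarrow> 'b set \<Rightarrow> 'b set \<Rightarrow> bool" where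
  "bipartite_parts VH EH X1 X2 \<longleftrightarrow> VH = X1 \<union> X2 \<and> X1 \<inter> X2 = {}
     \<and> (\<forall>x y. EH x y \<longrightarrow> (x \<in> X1 \<and> y \<in> X2) \<or> (x \<in> X2 \<and> y \<in> X1))"

end

theory Submission
  imports Defs "HOL-Analysis.L2_Norm"
begin

text \<open>Let \<open>A\<close> be the adjacency matrix of \<open>\<G>\<close> and, for a vertex \<open>v\<close> of \<open>G\<close>, let \<open>P\<^sub>v\<close> be the
  diagonal projection onto the \<open>r\<close>-sets containing \<open>v\<close>. An overlapping \<open>2k\<close>-cycle has two
  cyclically non-adjacent positions \<open>i < j\<close> whose sets share some \<open>v\<close>, and these cycles are
  counted by \<open>tr (A P\<^sub>v A \<cdot> A\<^sup>a \<cdot> A P\<^sub>v A \<cdot> A\<^sup>b)\<close> with \<open>a + b = 2k - 4\<close>. Summed over \<open>v\<close>, this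
  trace is log-convex along \<open>a + b = const\<close> (Cauchy-Schwarz for the trace inner product), so it
  is largest at \<open>a = 0\<close>. There Schur's test bounds \<open>\<parallel>A P\<^sub>v\<parallel>\<^sup>2\<close> by
  \<open>\<Lambda> = r D\<^sub>1\<^bsup>1-1/r\<^esup> D\<^sub>2\<close>, because an \<open>r\<close>-set of degree \<open>d\<close> has at most \<open>r d\<^bsup>1-1/r\<^esup>\<close>
  neighbours containing \<open>v\<close>; this gives \<open>B \<le> 4k\<^sup>2 r \<Lambda> tr A\<^bsup>2k-2\<^esup>\<close>. Finally \<open>tr A\<^bsup>2j\<^esup>\<close> is
  log-convex in \<open>j\<close>, so \<open>tr A\<^bsup>2k-2\<^esup>\<close> is controlled by \<open>hom(C\<^sub>2\<^sub>k, \<G>) = tr A\<^bsup>2k\<^esup>\<close> together with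
  \<open>tr A\<^sup>0 = m\<close> or \<open>tr A\<^sup>2 \<le> m D\<^sub>2\<close>, and the geometric mean of this bound with the trivial
  bound \<open>B \<le> hom(C\<^sub>2\<^sub>k, \<G>)\<close> gives both estimates.\<close>

section \<open>Log-convex sequences\<close>

lemma log_convex_le_max_ends:
  fixes g :: "nat \<Rightarrow> real"
  assumes nonneg: "\<And>p. 0 \<le> g p"
    and log_convex: "\<And>p. Suc p < N \<Longrightarrow> (g (Suc p))\<^sup>2 \<le> g p * g (Suc (Suc p))"
    and "p \<le> N"
  shows "g p \<le> max (g 0) (g N)"
proof -
  define M where "M = Max (g ` {0..N})"
  have le_M: "q \<le> N \<Longrightarrow> g q \<le> M" for q
    unfolding M_def by (intro Max_ge) auto
  have "M \<in> g ` {0..N}"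
    unfolding M_def by (intro Max_in) auto
  then obtain q where "q \<le> N \<and> g q = M" by auto
  define p0 where "p0 = (LEAST q. q \<le> N \<and> g q = M)"
  have p0: "p0 \<le> N" "g p0 = M"
    using LeastI[of "\<lambda>q. q \<le> N \<and> g q = M", OF \<open>q \<le> N \<and> g q = M\<close>] unfolding p0_def by auto
  have "p0 = 0 \<or> p0 = N"
  proof (rule ccontr)
    assume "\<not> (p0 = 0 \<or> p0 = N)"
    then obtain p where p: "p0 = Suc p" "Suc p < N"
      using p0(1) by (cases p0) auto
    have "g p \<noteq> M"
      using not_less_Least[of p "\<lambda>q. q \<le> N \<and> g q = M"] p unfolding p0_def[symmetric] by auto
    then have less: "g p < M"
      using le_M[of p] p by auto
    then have "0 < M"
      using nonneg[of p] by simp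
    have "M\<^sup>2 \<le> g p * g (Suc (Suc p))"
      using log_convex[OF p(2)] p0 p by simp
    also have "\<dots> \<le> g p * M"
      using le_M[of "Suc (Suc p)"] p nonneg[of p] by (intro mult_left_mono) auto
    also have "\<dots> < M * M"
      using less \<open>0 < M\<close> by simp
    finally show False
      by (simp add: power2_eq_square)
  qed
  then show ?thesis
    using le_M[OF \<open>p \<le> N\<close>] p0 by auto
qed

lemma antidiagonal_le_corner:
  fixes F :: "nat \<Rightarrow> nat \<Rightarrow> real"
  assumes cauchy_schwarz: "\<And>s1 s2 t1 t2. (F (s1 + s2) (t1 + t2))\<^sup>2 \<le> F (2 * s1) (2 * t1) * F (2 * s2) (2 * t2)"
    and nonneg: "\<And>a b. 0 \<le> F (2 * a) (2 * b)"
    and swap: "F 0 (2 * N) = F (2 * N) 0"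
    and "s \<le> 2 * N"
  shows "F s (2 * N - s) \<le> F 0 (2 * N)"
proof -
  define g where "g p = F (2 * p) (2 * (N - p))" for p
  \<comment> \<open>The even points form a log-convex sequence \<open>g\<close>; an odd point is bounded by the geometric
    mean of its two even neighbours.\<close>
  have g_le: "g p \<le> F 0 (2 * N)" if "p \<le> N" for p
  proof -
    have "g p \<le> max (g 0) (g N)"
    proof (rule log_convex_le_max_ends[OF _ _ that])
      show "0 \<le> g p" for p
        unfolding g_def by (rule nonneg)
      show "(g (Suc p))\<^sup>2 \<le> g p * g (Suc (Suc p))" if "Suc p < N" for p
      proof -
        have "p + Suc (Suc p) = 2 * Suc p" "N - p + (N - Suc (Suc p)) = 2 * (N - Suc p)"
          using that by auto
        then show ?thesis
          using cauchy_schwarz[of p "Suc (Suc p)" "N - p" "N - Suc (Suc p)"] unfolding g_def by (simp only:)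
      qed
    qed
    then show ?thesis
      using swap unfolding g_def by simp
  qed
  show ?thesis
  proof (cases "even s")
    case True
    then obtain p where "s = 2 * p" by auto
    then show ?thesis
      using g_le[of p] \<open>s \<le> 2 * N\<close> unfolding g_def by (simp add: diff_mult_distrib2)
  next
    case False
    then obtain p where p: "s = Suc (2 * p)" by (metis oddE Suc_eq_plus1)
    have "p + Suc p = s" "N - p + (N - Suc p) = 2 * N - s"
      using p \<open>s \<le> 2 * N\<close> by auto
    then have "(F s (2 * N - s))\<^sup>2 \<le> g p * g (Suc p)"
      using cauchy_schwarz[of p "Suc p" "N - p" "N - Suc p"] unfolding g_def by (simp only: mult_2)
    also have "\<dots> \<le> (F 0 (2 * N))\<^sup>2"
      using g_le[of p] g_le[of "Suc p"] p \<open>s \<le> 2 * N\<close> nonneg[of p "N - p"] nonneg[of "Suc p" "N - Suc p"]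
      unfolding power2_eq_square g_def by (intro mult_mono) auto
    finally show ?thesis
      by (rule power2_le_imp_le) (use nonneg[of 0 N] in simp)
  qed
qed

lemma log_convex_zero_upwards:
  fixes a :: "nat \<Rightarrow> real"
  assumes log_convex: "\<And>j. (a (Suc j))\<^sup>2 \<le> a j * a (Suc (Suc j))"
    and "a j = 0" "j \<le> l"
  shows "a l = 0"
  using \<open>j \<le> l\<close>
proof (induction l rule: dec_induct)
  case (step l)
  then show ?case
    using log_convex[of l] by simp
qed (use assms in simp)

lemma log_convex_ratio_le:
  fixes a :: "nat \<Rightarrow> real"
  assumes nonneg: "\<And>j. 0 \<le> a j"
    and log_convex: "\<And>j. (a (Suc j))\<^sup>2 \<le> a j * a (Suc (Suc j))"
    and pos: "\<And>j. j < k \<Longrightarrow> 0 < a j"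
    and "i < k"
  shows "a (Suc i) * a (k - 1) \<le> a i * a k"
proof -
  have "i \<le> k - 1" using \<open>i < k\<close> by simp
  then show ?thesis
  proof (induction i rule: inc_induct)
    case base
    then show ?case
      using \<open>i < k\<close> by (simp add: mult.commute)
  next
    case (step i)
    have "a (Suc i) * (a (Suc i) * a (k - 1)) = (a (Suc i))\<^sup>2 * a (k - 1)"
      by (simp add: power2_eq_square)
    also have "\<dots> \<le> a i * a (Suc (Suc i)) * a (k - 1)"
      using log_convex nonneg by (intro mult_right_mono) auto
    also have "\<dots> \<le> a i * (a (Suc i) * a k)"
      using step.IH nonneg by (simp add: mult.assoc mult_left_mono)
    finally show ?case
      using pos[of "Suc i"] step.hyps by (simp add: mult.left_commute)
  qed
qed

lemma log_convex_interpolation: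
  fixes a :: "nat \<Rightarrow> real"
  assumes nonneg: "\<And>j. 0 \<le> a j"
    and log_convex: "\<And>j. (a (Suc j))\<^sup>2 \<le> a j * a (Suc (Suc j))"
    and "i < k"
  shows "a (k - 1) ^ (k - i) \<le> a i * a k ^ (k - 1 - i)"
proof (cases "a (k - 1) = 0")
  case True
  then show ?thesis
    using \<open>i < k\<close> nonneg by (auto simp: power_0_left)
next
  case False
  then have pos: "0 < a j" if "j < k" for j
    using log_convex_zero_upwards[where a = a, OF log_convex, of j "k - 1"] nonneg[of j] that by fastforce
  have "i \<le> k - 1" using \<open>i < k\<close> by simp
  then show ?thesis
  proof (induction i rule: inc_induct)
    case base
    then show ?case
      using \<open>i < k\<close> by simp
  next
    case (step i)
    have "k - i = Suc (k - Suc i)" "k - 1 - i = Suc (k - 1 - Suc i)"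
      using step.hyps by auto
    then have "a (k - 1) ^ (k - i) = a (k - 1) * a (k - 1) ^ (k - Suc i)"
      by simp
    also have "\<dots> \<le> a (k - 1) * (a (Suc i) * a k ^ (k - 1 - Suc i))"
      using step.IH nonneg by (intro mult_left_mono) auto
    also have "\<dots> = a (Suc i) * a (k - 1) * a k ^ (k - 1 - Suc i)"
      by simp
    also have "\<dots> \<le> a i * a k * a k ^ (k - 1 - Suc i)"
      using log_convex_ratio_le[where a = a and k = k and i = i, OF nonneg log_convex pos] step.hyps nonneg
      by (intro mult_right_mono) auto
    also have "\<dots> = a i * a k ^ (k - 1 - i)"
      using \<open>k - 1 - i = Suc (k - 1 - Suc i)\<close> by simp
    finally show ?case .
  qed
qed

section \<open>Elementary inequalities\<close>

lemma power2_powr: "(x powr a)\<^sup>2 = x powr (2 * a)" for x :: real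
  by (cases "x = 0") (simp_all add: powr_power)

lemma mult_powr_swap_le:
  fixes a b q :: real
  assumes "0 \<le> a" "a \<le> b" "0 \<le> q" "q \<le> 1"
  shows "a * b powr q \<le> a powr q * b"
proof (cases "a = 0")
  case False
  then have "0 < a" "0 < b"
    using assms by auto
  have "a * b powr q = a powr q * a powr (1 - q) * b powr q"
    using \<open>0 < a\<close> by (simp add: powr_add[symmetric])
  also have "\<dots> \<le> a powr q * b powr (1 - q) * b powr q"
    using assms \<open>0 < a\<close> by (intro mult_right_mono mult_left_mono powr_mono2) auto
  also have "\<dots> = a powr q * b"
    using \<open>0 < b\<close> by (simp add: mult.assoc powr_add[symmetric])
  finally show ?thesis .
qed simp

lemma root_interpolation_bound:
  fixes W X H :: real and p :: nat
  assumes "0 < W" "0 \<le> X" "0 < H" "1 \<le> p" "W ^ p \<le> X * H ^ (p - 1)"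
  shows "W \<le> X powr (1 / real p) * H powr (1 - 1 / real p)"
proof -
  have "W = (W ^ p) powr (1 / real p)"
    using assms by (simp add: powr_realpow[symmetric] powr_powr)
  also have "\<dots> \<le> (X * H powr real (p - 1)) powr (1 / real p)"
    using assms by (intro powr_mono2) (simp_all only: powr_realpow, auto)
  also have "\<dots> = X powr (1 / real p) * H powr (1 - 1 / real p)"
    using assms by (simp add: powr_mult powr_powr field_simps)
  finally show ?thesis .
qed

lemma geometric_mean_bound:
  fixes B H W C c X :: real and p :: nat
  assumes "0 \<le> B" "B \<le> H" "B \<le> C * W" "0 \<le> W" "0 \<le> X" "1 \<le> p"
    and interpolation: "W ^ p \<le> X * H ^ (p - 1)"
    and "C \<le> c\<^sup>2" "0 \<le> c"
  shows "B \<le> c * X powr (1 / (2 * real p)) * H powr (1 - 1 / (2 * real p))"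
proof (cases "W = 0 \<or> H = 0")
  case True
  then show ?thesis
    using assms by auto
next
  case False
  then have "0 < W" "0 < H"
    using assms by auto
  have W: "W \<le> X powr (1 / real p) * H powr (1 - 1 / real p)"
    using root_interpolation_bound[OF \<open>0 < W\<close> \<open>0 \<le> X\<close> \<open>0 < H\<close> \<open>1 \<le> p\<close> interpolation] .
  have exponents: "2 * (1 / (2 * real p)) = 1 / real p" "2 * (1 - 1 / (2 * real p)) = 1 + (1 - 1 / real p)"
    using \<open>1 \<le> p\<close> by (simp_all add: field_simps)
  have "B\<^sup>2 \<le> H * (C * W)"
    unfolding power2_eq_square using assms by (intro mult_mono) auto
  also have "\<dots> \<le> H * (c\<^sup>2 * (X powr (1 / real p) * H powr (1 - 1 / real p)))"
    using assms W \<open>0 < H\<close> by (intro mult_left_mono mult_mono) auto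
  also have "\<dots> = c\<^sup>2 * X powr (1 / real p) * H powr (1 + (1 - 1 / real p))"
    using \<open>0 < H\<close> by (simp add: powr_mult_base)
  also have "\<dots> = c\<^sup>2 * X powr (2 * (1 / (2 * real p))) * H powr (2 * (1 - 1 / (2 * real p)))"
    by (simp only: exponents)
  also have "\<dots> = (c * X powr (1 / (2 * real p)) * H powr (1 - 1 / (2 * real p)))\<^sup>2"
    by (simp add: power_mult_distrib power2_powr)
  finally show ?thesis
    by (rule power2_le_imp_le) (use assms in simp)
qed

lemma overlap_constant_le:
  fixes k r :: nat and D :: real
  assumes "1 \<le> k" "1 \<le> r" "0 \<le> D"
  shows "4 * real k ^ 2 * real r ^ 2 * D
    \<le> (32 * real k powr (3 / 2) * real r powr ((real r + 1) / 2) * D powr (1 / 2))\<^sup>2"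
proof -
  have "real k ^ 2 \<le> real k ^ 3" "real r ^ 2 \<le> real r ^ (r + 1)"
    using assms by (intro power_increasing; simp)+
  then have "4 * real k ^ 2 * real r ^ 2 * D \<le> 1024 * real k ^ 3 * real r ^ (r + 1) * D"
    using assms by (intro mult_right_mono mult_mono) auto
  also have "\<dots> = (32 * real k powr (3 / 2) * real r powr ((real r + 1) / 2) * D powr (1 / 2))\<^sup>2"
  proof -
    have "(real k powr (3 / 2))\<^sup>2 = real k ^ 3"
      unfolding power2_powr using assms by simp
    moreover have "(real r powr ((real r + 1) / 2))\<^sup>2 = real r powr real (r + 1)"
      unfolding power2_powr by (rule arg_cong[where f = "\<lambda>e. real r powr e"]) (simp add: field_simps)
    moreover have "real r powr real (r + 1) = real r ^ (r + 1)"
      using assms by (intro powr_realpow) simp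
    moreover have "(D powr (1 / 2))\<^sup>2 = D"
      unfolding power2_powr using assms by simp
    ultimately show ?thesis
      by (simp add: power_mult_distrib)
  qed
  finally show ?thesis .
qed

lemma sum_product_square_le:
  fixes a b :: "'c \<Rightarrow> real"
  shows "(\<Sum>i\<in>I. a i * b i)\<^sup>2 \<le> (\<Sum>i\<in>I. (a i)\<^sup>2) * (\<Sum>i\<in>I. (b i)\<^sup>2)"
proof -
  have "\<bar>\<Sum>i\<in>I. a i * b i\<bar> \<le> L2_set a I * L2_set b I"
    using sum_abs[of "\<lambda>i. a i * b i" I] L2_set_mult_ineq[of a b I] by (simp add: abs_mult)
  then have "(\<Sum>i\<in>I. a i * b i)\<^sup>2 \<le> (L2_set a I * L2_set b I)\<^sup>2"
    using power_mono[of _ _ 2] by (metis abs_ge_zero power2_abs)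
  then show ?thesis
    by (simp add: power_mult_distrib L2_set_def sum_nonneg)
qed

lemma schur_test:
  fixes M :: "'b \<Rightarrow> 'b \<Rightarrow> real"
  assumes nonneg: "\<And>x z. 0 \<le> M x z"
    and bound: "\<And>z. z \<in> S \<Longrightarrow> p z \<Longrightarrow> (\<Sum>x\<in>S. M x z * (\<Sum>z'\<in>S. if p z' then M x z' else 0)) \<le> \<Lambda>"
  shows "(\<Sum>x\<in>S. (\<Sum>z\<in>S. if p z then M x z * w z else 0)\<^sup>2) \<le> \<Lambda> * (\<Sum>z\<in>S. if p z then (w z)\<^sup>2 else 0)"
proof -
  define row where "row x = (\<Sum>z'\<in>S. if p z' then M x z' else 0)" for x
  have row_nonneg: "0 \<le> row x" for x
    unfolding row_def using nonneg by (intro sum_nonneg) auto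
  have row_bound: "(\<Sum>z\<in>S. if p z then M x z * w z else 0)\<^sup>2 \<le> row x * (\<Sum>z\<in>S. if p z then M x z * (w z)\<^sup>2 else 0)" for x
  proof -
    define a where "a z = (if p z then sqrt (M x z) else 0)" for z
    have "(\<Sum>z\<in>S. if p z then M x z * w z else 0) = (\<Sum>z\<in>S. a z * (a z * w z))"
      unfolding a_def using nonneg by (intro sum.cong refl) (simp add: mult.assoc[symmetric])
    also have "(\<dots>)\<^sup>2 \<le> (\<Sum>z\<in>S. (a z)\<^sup>2) * (\<Sum>z\<in>S. (a z * w z)\<^sup>2)"
      by (rule sum_product_square_le)
    also have "\<dots> = row x * (\<Sum>z\<in>S. if p z then M x z * (w z)\<^sup>2 else 0)"
      unfolding row_def a_def using nonneg
      by (intro arg_cong2[where f = "(*)"] sum.cong refl) (auto simp: power_mult_distrib)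
    finally show ?thesis .
  qed
  have "(\<Sum>x\<in>S. (\<Sum>z\<in>S. if p z then M x z * w z else 0)\<^sup>2)
      \<le> (\<Sum>x\<in>S. row x * (\<Sum>z\<in>S. if p z then M x z * (w z)\<^sup>2 else 0))"
    by (intro sum_mono row_bound)
  also have "\<dots> = (\<Sum>z\<in>S. \<Sum>x\<in>S. if p z then (w z)\<^sup>2 * (M x z * row x) else 0)"
    by (subst sum.swap) (simp add: sum_distrib_left if_distrib[of "\<lambda>t. row _ * t"] mult_ac cong: if_cong)
  also have "\<dots> = (\<Sum>z\<in>S. if p z then (w z)\<^sup>2 * (\<Sum>x\<in>S. M x z * row x) else 0)"
    by (intro sum.cong refl) (auto simp: sum_distrib_left)
  also have "\<dots> \<le> (\<Sum>z\<in>S. if p z then (w z)\<^sup>2 * \<Lambda> else 0)"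
    using bound unfolding row_def by (intro sum_mono) (auto intro: mult_left_mono)
  also have "\<dots> = \<Lambda> * (\<Sum>z\<in>S. if p z then (w z)\<^sup>2 else 0)"
    by (simp add: sum_distrib_left if_distrib[of "\<lambda>t. \<Lambda> * t"] mult.commute cong: if_cong)
  finally show ?thesis .
qed

section \<open>Matrices indexed by a finite set\<close>

lemma sum_PiE_insert:
  assumes "x \<notin> I"
  shows "(\<Sum>f\<in>insert x I \<rightarrow>\<^sub>E S. F f) = (\<Sum>(z, g)\<in>S \<times> (I \<rightarrow>\<^sub>E S). F (g(x := z)))"
  using sum.reindex[OF inj_combinator[OF assms, of "\<lambda>_. S"], of F]
  by (simp add: PiE_insert_eq case_prod_unfold comp_def)

type_synonym 'b mat = "'b \<Rightarrow> 'b \<Rightarrow> real"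

definition transpose_mat :: "'b mat \<Rightarrow> 'b mat" where
  "transpose_mat X = (\<lambda>x y. X y x)"

definition walk_between :: "'b \<Rightarrow> 'b \<Rightarrow> nat \<Rightarrow> (nat \<Rightarrow> 'b) \<Rightarrow> nat \<Rightarrow> 'b" where
  "walk_between x y n g t = (if t = 0 then x else if t = Suc n then y else g t)"

locale matrices_on =
  fixes S :: "'b set"
  assumes finite_S: "finite S"
begin

definition mmult :: "'b mat \<Rightarrow> 'b mat \<Rightarrow> 'b mat" (infixr "\<odot>" 70) where
  "X \<odot> Y = (\<lambda>x y. if x \<in> S \<and> y \<in> S then \<Sum>z\<in>S. X x z * Y z y else 0)"

definition diag_mat :: "('b \<Rightarrow> bool) \<Rightarrow> 'b mat" where
  "diag_mat p = (\<lambda>x y. if x \<in> S \<and> x = y \<and> p x then 1 else 0)"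

abbreviation one_mat :: "'b mat" where
  "one_mat \<equiv> diag_mat (\<lambda>_. True)"

definition supported :: "'b mat \<Rightarrow> bool" where
  "supported X \<longleftrightarrow> (\<forall>x y. X x y \<noteq> 0 \<longrightarrow> x \<in> S \<and> y \<in> S)"

primrec mpow :: "'b mat \<Rightarrow> nat \<Rightarrow> 'b mat" where
  "mpow X 0 = one_mat"
| "mpow X (Suc n) = X \<odot> mpow X n"

primrec mprod :: "'b mat list \<Rightarrow> 'b mat" where
  "mprod [] = one_mat"
| "mprod (X # Xs) = X \<odot> mprod Xs"

definition tr :: "'b mat \<Rightarrow> real" where
  "tr X = (\<Sum>x\<in>S. X x x)"

definition frob :: "'b mat \<Rightarrow> 'b mat \<Rightarrow> real" where
  "frob X Y = (\<Sum>x\<in>S. \<Sum>y\<in>S. X x y * Y x y)"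

lemma supported_mmult [simp]: "supported (X \<odot> Y)"
  by (auto simp: supported_def mmult_def)

lemma supported_diag [simp]: "supported (diag_mat p)"
  by (auto simp: supported_def diag_mat_def)

lemma supported_mpow [simp]: "supported (mpow X n)"
  by (cases n) auto

lemma supported_mprod [simp]: "supported (mprod Xs)"
  by (cases Xs) auto

lemma supportedD: "supported X \<Longrightarrow> x \<notin> S \<or> y \<notin> S \<Longrightarrow> X x y = 0"
  by (auto simp: supported_def)

lemma mmult_assoc: "(X \<odot> Y) \<odot> Z = X \<odot> Y \<odot> Z"
  unfolding mmult_def
  by (auto simp: fun_eq_iff  sum_distrib_left sum_distrib_right mult.assoc intro: sum.swap)

lemma diag_mmult: "diag_mat p \<odot> Z = (\<lambda>x y. if x \<in> S \<and> y \<in> S \<and> p x then Z x y else 0)"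
  using finite_S by (auto simp: fun_eq_iff  mmult_def diag_mat_def if_distrib[of "\<lambda>a. a * _"] cong: if_cong)

lemma tr_one: "tr one_mat = real (card S)"
  by (simp add: tr_def diag_mat_def)

lemma tr_mmult_commute: "tr (X \<odot> Y) = tr (Y \<odot> X)"
proof -
  have "(\<Sum>x\<in>S. \<Sum>z\<in>S. X x z * Y z x) = (\<Sum>z\<in>S. \<Sum>x\<in>S. X x z * Y z x)"
    by (rule sum.swap)
  then show ?thesis
    unfolding tr_def mmult_def by (simp add: mult.commute)
qed

lemma transpose_mmult: "transpose_mat (X \<odot> Y) = transpose_mat Y \<odot> transpose_mat X"
  unfolding transpose_mat_def mmult_def by (auto simp: fun_eq_iff  mult.commute)

lemma transpose_diag [simp]: "transpose_mat (diag_mat p) = diag_mat p"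
  unfolding transpose_mat_def diag_mat_def by (auto simp: fun_eq_iff)

lemma transpose_transpose [simp]: "transpose_mat (transpose_mat X) = X"
  by (simp add: transpose_mat_def)

lemma mmult_diag: "Z \<odot> diag_mat p = (\<lambda>x y. if x \<in> S \<and> y \<in> S \<and> p y then Z x y else 0)"
proof -
  have "Z \<odot> diag_mat p = transpose_mat (diag_mat p \<odot> transpose_mat Z)"
    by (simp add: transpose_mmult)
  then show ?thesis
    by (auto simp: diag_mmult transpose_mat_def fun_eq_iff)
qed

lemma one_mmult [simp]: "supported X \<Longrightarrow> one_mat \<odot> X = X"
  by (auto simp: fun_eq_iff  diag_mmult supportedD)

lemma mmult_one [simp]: "supported X \<Longrightarrow> X \<odot> one_mat = X"
  by (auto simp: fun_eq_iff  mmult_diag supportedD)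

lemma diag_mmult_idem: "diag_mat p \<odot> diag_mat p \<odot> Z = diag_mat p \<odot> Z"
  by (auto simp: fun_eq_iff  diag_mmult)

lemma mpow_add: "supported X \<Longrightarrow> mpow X (a + b) = mpow X a \<odot> mpow X b"
  by (induction a) (auto simp: mmult_assoc)

lemma mpow_Suc_right: "supported X \<Longrightarrow> mpow X (Suc n) = mpow X n \<odot> X"
  using mpow_add[of X n 1] by simp

lemma mprod_append: "mprod (Xs @ Ys) = mprod Xs \<odot> mprod Ys"
  by (induction Xs) (auto simp: mmult_assoc)

lemma mprod_replicate: "mprod (replicate n X) = mpow X n"
  by (induction n) auto

lemma transpose_mpow:
  "supported X \<Longrightarrow> transpose_mat X = X \<Longrightarrow> transpose_mat (mpow X n) = mpow X n"
  by (induction n) (simp_all add: transpose_mmult mpow_Suc_right[symmetric])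

lemma frob_eq_tr: "frob X Y = tr (transpose_mat X \<odot> Y)"
proof -
  have "(\<Sum>x\<in>S. \<Sum>y\<in>S. X x y * Y x y) = (\<Sum>y\<in>S. \<Sum>x\<in>S. X x y * Y x y)"
    by (rule sum.swap)
  then show ?thesis
    unfolding frob_def tr_def mmult_def transpose_mat_def by simp
qed

lemma frob_self_nonneg: "0 \<le> frob X X"
  unfolding frob_def by (intro sum_nonneg) auto

lemma frob_as_sum: "frob X Y = (\<Sum>(x, y)\<in>S \<times> S. X x y * Y x y)"
  unfolding frob_def by (simp add: sum.cartesian_product)

lemma frob_cauchy_schwarz: "(frob X Y)\<^sup>2 \<le> frob X X * frob Y Y"
  unfolding frob_as_sum using sum_product_square_le[of "\<lambda>(x, y). X x y" "\<lambda>(x, y). Y x y" "S \<times> S"]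
  by (simp add: case_prod_beta power2_eq_square)

lemma frob_mmult_schur_le:
  assumes nonneg: "\<And>x y. 0 \<le> M x y"
    and bound: "\<And>z. z \<in> S \<Longrightarrow> p z \<Longrightarrow> (\<Sum>x\<in>S. M x z * (\<Sum>z'\<in>S. if p z' then M x z' else 0)) \<le> \<Lambda>"
    and rows: "\<And>z y. \<not> p z \<Longrightarrow> Z z y = 0"
  shows "frob (M \<odot> Z) (M \<odot> Z) \<le> \<Lambda> * frob Z Z"
proof -
  have inner: "(\<Sum>z\<in>S. M x z * Z z y) = (\<Sum>z\<in>S. if p z then M x z * Z z y else 0)" for x y
    using rows by (intro sum.cong) auto
  have "frob (M \<odot> Z) (M \<odot> Z) = (\<Sum>x\<in>S. \<Sum>y\<in>S. (\<Sum>z\<in>S. M x z * Z z y)\<^sup>2)"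
    unfolding frob_def mmult_def by (simp add: power2_eq_square)
  also have "\<dots> = (\<Sum>y\<in>S. \<Sum>x\<in>S. (\<Sum>z\<in>S. if p z then M x z * Z z y else 0)\<^sup>2)"
    unfolding inner by (rule sum.swap)
  also have "\<dots> \<le> (\<Sum>y\<in>S. \<Lambda> * (\<Sum>z\<in>S. if p z then (Z z y)\<^sup>2 else 0))"
    by (intro sum_mono schur_test[OF nonneg bound])
  also have "\<dots> = \<Lambda> * (\<Sum>y\<in>S. \<Sum>z\<in>S. Z z y * Z z y)"
    using rows by (auto simp: sum_distrib_left power2_eq_square intro!: sum.cong)
  also have "(\<Sum>y\<in>S. \<Sum>z\<in>S. Z z y * Z z y) = frob Z Z"
    unfolding frob_def by (rule sum.swap)
  finally show ?thesis .
qed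

lemma mprod_walk_sum:
  assumes "x \<in> S" "y \<in> S"
  shows "mprod (map c [0..<Suc n]) x y =
    (\<Sum>g\<in>{1..n} \<rightarrow>\<^sub>E S. \<Prod>t\<le>n. c t (walk_between x y n g t) (walk_between x y n g (Suc t)))"
  using assms(2)
proof (induction n arbitrary: y)
  case 0
  then show ?case
    using assms(1) by (simp add: mmult_diag walk_between_def)
next
  case (Suc n)
  let ?w = "walk_between x" and ?P = "{1..n} \<rightarrow>\<^sub>E S"
  have "map c [0..<Suc (Suc n)] = map c [0..<Suc n] @ [c (Suc n)]"
    by simp
  then have "mprod (map c [0..<Suc (Suc n)]) x y = (mprod (map c [0..<Suc n]) \<odot> c (Suc n) \<odot> one_mat) x y"
    by (simp only: mprod_append mprod.simps)
  also have "\<dots> = (\<Sum>z\<in>S. mprod (map c [0..<Suc n]) x z * c (Suc n) z y)"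
    using assms(1) Suc.prems by (simp only: mmult_diag) (simp add: mmult_def)
  also have "\<dots> = (\<Sum>(z, g)\<in>S \<times> ?P. (\<Prod>t\<le>n. c t (?w z n g t) (?w z n g (Suc t))) * c (Suc n) z y)"
    using Suc.IH by (simp add: sum_distrib_right sum.cartesian_product)
  also have "\<dots> = (\<Sum>(z, g)\<in>S \<times> ?P. \<Prod>t\<le>Suc n.
      c t (?w y (Suc n) (g(Suc n := z)) t) (?w y (Suc n) (g(Suc n := z)) (Suc t)))"
  proof (rule sum.cong[OF refl], clarify)
    fix z g
    let ?v = "?w y (Suc n) (g(Suc n := z))"
    have v: "t \<le> Suc n \<Longrightarrow> ?v t = ?w z n g t" for t
      by (auto simp: walk_between_def)
    have "(\<Prod>t\<le>Suc n. c t (?v t) (?v (Suc t))) = (\<Prod>t\<le>n. c t (?v t) (?v (Suc t))) * c (Suc n) z y"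
      by (simp add: atMost_Suc walk_between_def mult.commute)
    also have "\<dots> = (\<Prod>t\<le>n. c t (?w z n g t) (?w z n g (Suc t))) * c (Suc n) z y"
      by (intro arg_cong2[where f = "(*)"] prod.cong refl) (simp_all add: v)
    finally show "(\<Prod>t\<le>n. c t (?w z n g t) (?w z n g (Suc t))) * c (Suc n) z y = (\<Prod>t\<le>Suc n. c t (?v t) (?v (Suc t)))" ..
  qed
  also have "\<dots> = (\<Sum>g\<in>{1..Suc n} \<rightarrow>\<^sub>E S. \<Prod>t\<le>Suc n. c t (?w y (Suc n) g t) (?w y (Suc n) g (Suc t)))"
    by (simp add: atLeastAtMostSuc_conv sum_PiE_insert)
  finally show ?case .
qed

lemma tr_mprod_cycle_sum:
  assumes "1 \<le> L"
  shows "tr (mprod (map c [0..<L])) = (\<Sum>f\<in>{..<L} \<rightarrow>\<^sub>E S. \<Prod>t<L. c t (f t) (f (Suc t mod L)))"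
proof -
  obtain n where L: "L = Suc n"
    using assms by (cases L) auto
  let ?w = "\<lambda>x. walk_between x x n" and ?P = "{1..n} \<rightarrow>\<^sub>E S"
  have "tr (mprod (map c [0..<L])) = (\<Sum>x\<in>S. \<Sum>g\<in>?P. \<Prod>t\<le>n. c t (?w x g t) (?w x g (Suc t)))"
    unfolding tr_def L by (intro sum.cong refl mprod_walk_sum)
  also have "\<dots> = (\<Sum>(x, g)\<in>S \<times> ?P. \<Prod>t<L. c t ((g(0 := x)) t) ((g(0 := x)) (Suc t mod L)))"
  proof -
    have "Suc t mod Suc n = (if t = n then 0 else Suc t)" if "t \<le> n" for t
      using that by auto
    then show ?thesis
      unfolding sum.cartesian_product L lessThan_Suc_atMost
      by (intro sum.cong refl) (auto intro!: prod.cong simp: walk_between_def)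
  qed
  also have "\<dots> = (\<Sum>f\<in>{..<L} \<rightarrow>\<^sub>E S. \<Prod>t<L. c t (f t) (f (Suc t mod L)))"
  proof -
    have "{..<L} = insert 0 {1..n}"
      unfolding L by auto
    then show ?thesis
      by (simp add: sum_PiE_insert)
  qed
  finally show ?thesis .
qed

end

section \<open>Symmetric matrices\<close>

lemma map_upt_two_points:
  assumes "i < j" "j < L"
  shows "map (\<lambda>t. if t = i \<or> t = j then Q else X) [0..<L]
       = replicate i X @ Q # replicate (j - Suc i) X @ Q # replicate (L - Suc j) X"
proof -
  have upt: "[0..<L] = [0..<i] @ i # [Suc i..<j] @ j # [Suc j..<L]"
    using assms upt_add_eq_append[of 0 i "L - i"] upt_add_eq_append[of "Suc i" j "L - j"]
    by (simp add: upt_conv_Cons)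
  have "map (\<lambda>t. if t = i \<or> t = j then Q else X) [a..<b] = replicate (b - a) X"
    if "\<forall>t. a \<le> t \<and> t < b \<longrightarrow> t \<noteq> i \<and> t \<noteq> j" for a b
  proof -
    have "map (\<lambda>t. if t = i \<or> t = j then Q else X) [a..<b] = map (\<lambda>t. X) [a..<b]"
      using that by (intro map_cong) auto
    then show ?thesis
      by (simp add: map_replicate_const)
  qed
  then show ?thesis
    unfolding upt using assms by simp
qed

locale symmetric_matrix = matrices_on S for S :: "'b set" +
  fixes A :: "'b mat"
  assumes supported_A: "supported A"
    and symmetric_A: "transpose_mat A = A"
begin

definition sandwich :: "('b \<Rightarrow> bool) \<Rightarrow> 'b mat" where
  "sandwich p = A \<odot> diag_mat p \<odot> A"

lemma supported_sandwich [simp]: "supported (sandwich p)"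
  by (simp add: sandwich_def)

lemma transpose_sandwich [simp]: "transpose_mat (sandwich p) = sandwich p"
  by (simp add: sandwich_def transpose_mmult symmetric_A mmult_assoc)

lemma transpose_mpow_A [simp]: "transpose_mat (mpow A n) = mpow A n"
  using transpose_mpow[OF supported_A symmetric_A] .

lemma mpow_A_add: "mpow A (a + b) = mpow A a \<odot> mpow A b"
  using mpow_add[OF supported_A] .

lemma mpow_A_Suc_right: "mpow A (Suc n) = mpow A n \<odot> A"
  using mpow_Suc_right[OF supported_A] .

lemma tr_two_marks:
  assumes "i < j" "j < L" "2 \<le> j - i" "j - i + 2 \<le> L"
  shows "tr (mprod (map (\<lambda>t. if t = i \<or> t = j then diag_mat p \<odot> A else A) [0..<L]))
       = tr (sandwich p \<odot> mpow A (j - i - 2) \<odot> sandwich p \<odot> mpow A (L - (j - i) - 2))"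
proof -
  define P where "P = diag_mat p"
  define a where "a = j - i - 2"
  define b where "b = L - (j - i) - 2"
  have "j - Suc i = Suc a" "L - Suc j + i = Suc b"
    using assms unfolding a_def b_def by auto
  have "tr (mprod (map (\<lambda>t. if t = i \<or> t = j then P \<odot> A else A) [0..<L]))
      = tr (mpow A i \<odot> P \<odot> A \<odot> mpow A (Suc a) \<odot> P \<odot> A \<odot> mpow A (L - Suc j))"
    unfolding map_upt_two_points[OF assms(1,2)] \<open>j - Suc i = Suc a\<close>
      mprod_append mprod.simps(2) mprod_replicate
    by (simp only: mmult_assoc)
  also have "\<dots> = tr ((P \<odot> A \<odot> mpow A (Suc a) \<odot> P \<odot> A \<odot> mpow A (L - Suc j)) \<odot> mpow A i)"
    by (rule tr_mmult_commute)
  also have "\<dots> = tr (P \<odot> A \<odot> mpow A (Suc a) \<odot> P \<odot> A \<odot> mpow A (Suc b))"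
    unfolding \<open>L - Suc j + i = Suc b\<close>[symmetric] by (simp only: mmult_assoc mpow_A_add)
  also have "\<dots> = tr ((P \<odot> A \<odot> mpow A a \<odot> A \<odot> P \<odot> A \<odot> mpow A b) \<odot> A)"
    by (simp add: mpow_A_Suc_right mmult_assoc del: mpow.simps)
  also have "\<dots> = tr (sandwich p \<odot> mpow A a \<odot> sandwich p \<odot> mpow A b)"
    by (subst tr_mmult_commute) (simp add: sandwich_def mmult_assoc P_def)
  finally show ?thesis
    unfolding P_def a_def b_def .
qed

definition pair_trace :: "'v set \<Rightarrow> ('v \<Rightarrow> 'b \<Rightarrow> bool) \<Rightarrow> nat \<Rightarrow> nat \<Rightarrow> real" where
  "pair_trace U P s t = (\<Sum>v\<in>U. tr (sandwich (P v) \<odot> mpow A s \<odot> sandwich (P v) \<odot> mpow A t))"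

lemma frob_sandwich_products:
  "frob (mpow A s1 \<odot> sandwich p \<odot> mpow A t1) (mpow A s2 \<odot> sandwich p \<odot> mpow A t2)
     = tr (sandwich p \<odot> mpow A (s1 + s2) \<odot> sandwich p \<odot> mpow A (t1 + t2))"
proof -
  have "frob (mpow A s1 \<odot> sandwich p \<odot> mpow A t1) (mpow A s2 \<odot> sandwich p \<odot> mpow A t2)
      = tr (mpow A t1 \<odot> sandwich p \<odot> mpow A s1 \<odot> mpow A s2 \<odot> sandwich p \<odot> mpow A t2)"
    unfolding frob_eq_tr by (simp add: transpose_mmult mmult_assoc)
  also have "\<dots> = tr ((sandwich p \<odot> mpow A s1 \<odot> mpow A s2 \<odot> sandwich p \<odot> mpow A t2) \<odot> mpow A t1)"
    by (rule tr_mmult_commute)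
  also have "\<dots> = tr (sandwich p \<odot> mpow A (s1 + s2) \<odot> sandwich p \<odot> mpow A (t2 + t1))"
    by (simp add: mmult_assoc mpow_A_add)
  finally show ?thesis
    by (simp add: add.commute)
qed

lemma pair_trace_cauchy_schwarz:
  "(pair_trace U P (s1 + s2) (t1 + t2))\<^sup>2 \<le> pair_trace U P (2 * s1) (2 * t1) * pair_trace U P (2 * s2) (2 * t2)"
proof -
  define X where "X v = mpow A s1 \<odot> sandwich (P v) \<odot> mpow A t1" for v
  define Y where "Y v = mpow A s2 \<odot> sandwich (P v) \<odot> mpow A t2" for v
  have as_sum: "(\<Sum>v\<in>U. frob (Z v) (Z' v)) = (\<Sum>(v, x, y)\<in>U \<times> S \<times> S. Z v x y * Z' v x y)" for Z Z'
    by (simp add: frob_as_sum sum.cartesian_product)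
  have "pair_trace U P (s1 + s2) (t1 + t2) = (\<Sum>v\<in>U. frob (X v) (Y v))"
    unfolding pair_trace_def X_def Y_def frob_sandwich_products ..
  moreover have "pair_trace U P (2 * s1) (2 * t1) = (\<Sum>v\<in>U. frob (X v) (X v))"
    unfolding pair_trace_def X_def mult_2 frob_sandwich_products ..
  moreover have "pair_trace U P (2 * s2) (2 * t2) = (\<Sum>v\<in>U. frob (Y v) (Y v))"
    unfolding pair_trace_def Y_def mult_2 frob_sandwich_products ..
  ultimately show ?thesis
    unfolding as_sum
    using sum_product_square_le[of "\<lambda>(v, x, y). X v x y" "\<lambda>(v, x, y). Y v x y" "U \<times> S \<times> S"]
    by (simp add: case_prod_beta power2_eq_square)
qed

lemma pair_trace_even_nonneg: "0 \<le> pair_trace U P (2 * a) (2 * b)"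
  unfolding pair_trace_def mult_2 frob_sandwich_products[symmetric]
  by (intro sum_nonneg frob_self_nonneg)

lemma pair_trace_swap: "pair_trace U P 0 n = pair_trace U P n 0"
  unfolding pair_trace_def
proof (intro sum.cong refl)
  fix v
  have "tr (sandwich (P v) \<odot> mpow A 0 \<odot> sandwich (P v) \<odot> mpow A n)
      = tr (sandwich (P v) \<odot> (sandwich (P v) \<odot> mpow A n))"
    by simp
  also have "\<dots> = tr ((sandwich (P v) \<odot> mpow A n) \<odot> sandwich (P v))"
    by (rule tr_mmult_commute)
  also have "\<dots> = tr (sandwich (P v) \<odot> mpow A n \<odot> sandwich (P v) \<odot> mpow A 0)"
    by (simp add: mmult_assoc)
  finally show "tr (sandwich (P v) \<odot> mpow A 0 \<odot> sandwich (P v) \<odot> mpow A n)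
      = tr (sandwich (P v) \<odot> mpow A n \<odot> sandwich (P v) \<odot> mpow A 0)" .
qed

lemma pair_trace_zero:
  "pair_trace U P 0 n = (\<Sum>v\<in>U. tr (sandwich (P v) \<odot> sandwich (P v) \<odot> mpow A n))"
  by (simp add: pair_trace_def)

lemma pair_trace_le_corner: "s \<le> 2 * N \<Longrightarrow> pair_trace U P s (2 * N - s) \<le> pair_trace U P 0 (2 * N)"
  by (rule antidiagonal_le_corner) (auto intro: pair_trace_cauchy_schwarz pair_trace_even_nonneg pair_trace_swap)

lemma tr_sandwich_square_le:
  assumes nonneg: "\<And>x y. 0 \<le> A x y"
    and bound: "\<And>z. z \<in> S \<Longrightarrow> p z \<Longrightarrow> (\<Sum>x\<in>S. A x z * (\<Sum>z'\<in>S. if p z' then A x z' else 0)) \<le> \<Lambda>"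
  shows "tr (sandwich p \<odot> sandwich p \<odot> mpow A (2 * q)) \<le> \<Lambda> * tr (sandwich p \<odot> mpow A (2 * q))"
proof -
  define W where "W = A \<odot> mpow A q"
  define Z where "Z = diag_mat p \<odot> W"
  have Z_rows: "\<not> p z \<Longrightarrow> Z z y = 0" for z y
    unfolding Z_def diag_mmult by simp
  have pow: "mpow A (2 * q) = mpow A q \<odot> mpow A q"
    by (simp add: mpow_A_add[symmetric] mult_2)
  have "frob (A \<odot> Z) (A \<odot> Z) = tr (mpow A q \<odot> A \<odot> diag_mat p \<odot> A \<odot> A \<odot> diag_mat p \<odot> A \<odot> mpow A q)"
    unfolding frob_eq_tr Z_def W_def by (simp add: transpose_mmult symmetric_A mmult_assoc)
  also have "\<dots> = tr ((A \<odot> diag_mat p \<odot> A \<odot> A \<odot> diag_mat p \<odot> A \<odot> mpow A q) \<odot> mpow A q)"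
    by (rule tr_mmult_commute)
  also have "\<dots> = tr (sandwich p \<odot> sandwich p \<odot> mpow A (2 * q))"
    unfolding pow sandwich_def by (simp add: mmult_assoc)
  finally have lhs: "tr (sandwich p \<odot> sandwich p \<odot> mpow A (2 * q)) = frob (A \<odot> Z) (A \<odot> Z)" ..
  have "frob Z Z = tr (mpow A q \<odot> A \<odot> diag_mat p \<odot> diag_mat p \<odot> A \<odot> mpow A q)"
    unfolding frob_eq_tr Z_def W_def by (simp add: transpose_mmult symmetric_A mmult_assoc)
  also have "\<dots> = tr ((A \<odot> diag_mat p \<odot> A \<odot> mpow A q) \<odot> mpow A q)"
    by (subst tr_mmult_commute) (simp add: diag_mmult_idem mmult_assoc)
  also have "\<dots> = tr (sandwich p \<odot> mpow A (2 * q))"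
    unfolding pow sandwich_def by (simp add: mmult_assoc)
  finally have rhs: "tr (sandwich p \<odot> mpow A (2 * q)) = frob Z Z" ..
  have "frob (A \<odot> Z) (A \<odot> Z) \<le> \<Lambda> * frob Z Z"
    by (rule frob_mmult_schur_le[OF nonneg bound Z_rows])
  then show ?thesis
    using lhs rhs by simp
qed

lemma tr_sandwich_mpow: "tr (sandwich p \<odot> mpow A n) = (\<Sum>x\<in>S. if p x then mpow A (n + 2) x x else 0)"
proof -
  have "tr (sandwich p \<odot> mpow A n) = tr ((diag_mat p \<odot> A \<odot> mpow A n) \<odot> A)"
    unfolding sandwich_def by (subst tr_mmult_commute) (simp add: mmult_assoc)
  also have "\<dots> = tr (diag_mat p \<odot> mpow A (n + 2))"
    by (simp add: mmult_assoc mpow_A_Suc_right[symmetric])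
  finally show ?thesis
    unfolding tr_def diag_mmult by (auto intro: sum.cong)
qed

lemma sum_tr_sandwich_mpow:
  assumes "finite U" and members: "\<And>x. x \<in> S \<Longrightarrow> card {v \<in> U. P v x} = r"
  shows "(\<Sum>v\<in>U. tr (sandwich (P v) \<odot> mpow A n)) = real r * tr (mpow A (n + 2))"
proof -
  have "(\<Sum>v\<in>U. tr (sandwich (P v) \<odot> mpow A n)) = (\<Sum>x\<in>S. \<Sum>v\<in>U. if P v x then mpow A (n + 2) x x else 0)"
    unfolding tr_sandwich_mpow by (rule sum.swap)
  also have "\<dots> = (\<Sum>x\<in>S. real r * mpow A (n + 2) x x)"
    using \<open>finite U\<close> members by (intro sum.cong refl) (simp add: sum.If_cases Int_def)
  finally show ?thesis
    unfolding tr_def by (simp add: sum_distrib_left)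
qed

lemma tr_mpow_as_frob: "tr (mpow A (i + j)) = frob (mpow A i) (mpow A j)"
  unfolding frob_eq_tr by (simp add: mpow_A_add)

lemma tr_mpow_even_nonneg: "0 \<le> tr (mpow A (2 * j))"
  unfolding mult_2 tr_mpow_as_frob by (rule frob_self_nonneg)

lemma tr_mpow_log_convex:
  "(tr (mpow A (2 * Suc j)))\<^sup>2 \<le> tr (mpow A (2 * j)) * tr (mpow A (2 * Suc (Suc j)))"
proof -
  have "2 * Suc j = j + Suc (Suc j)"
    by simp
  then have "tr (mpow A (2 * Suc j)) = frob (mpow A j) (mpow A (Suc (Suc j)))"
    by (simp only: tr_mpow_as_frob)
  then show ?thesis
    unfolding mult_2 tr_mpow_as_frob by (simp only: frob_cauchy_schwarz)
qed

lemma tr_mpow_interpolation: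
  assumes "i < k"
  shows "tr (mpow A (2 * (k - 1))) ^ (k - i) \<le> tr (mpow A (2 * i)) * tr (mpow A (2 * k)) ^ (k - 1 - i)"
  using log_convex_interpolation[where a = "\<lambda>j. tr (mpow A (2 * j))", OF tr_mpow_even_nonneg tr_mpow_log_convex assms] .

end

section \<open>Closed walks in a graph\<close>

lemma prod_of_bool:
  assumes "finite I"
  shows "(\<Prod>t\<in>I. of_bool (Q t)) = (of_bool (\<forall>t\<in>I. Q t) :: 'a::comm_semiring_1)"
  using assms by (induction I rule: finite_induct) auto

definition adj_mat :: "('b \<Rightarrow> 'b \<Rightarrow> bool) \<Rightarrow> 'b mat" where
  "adj_mat R = (\<lambda>x y. of_bool (R x y))"

definition cyclic_gap_pairs :: "nat \<Rightarrow> (nat \<times> nat) set" where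
  "cyclic_gap_pairs L = {(i, j). i < j \<and> j < L \<and> 2 \<le> j - i \<and> j - i + 2 \<le> L}"
  \<comment> \<open>positions \<open>i < j\<close> of a closed \<open>L\<close>-walk at cyclic distance at least 2\<close>

lemma card_cyclic_gap_pairs_le: "card (cyclic_gap_pairs L) \<le> L * L"
proof -
  have "cyclic_gap_pairs L \<subseteq> {..<L} \<times> {..<L}"
    unfolding cyclic_gap_pairs_def by auto
  then show ?thesis
    using card_mono[of "{..<L} \<times> {..<L}"] by (simp add: card_cartesian_product)
qed

lemma finite_cyclic_gap_pairs: "finite (cyclic_gap_pairs L)"
  by (rule finite_subset[of _ "{..<L} \<times> {..<L}"]) (auto simp: cyclic_gap_pairs_def)

lemma finite_hom_cycles:
  assumes "finite S"
  shows "finite (hom_cycles L S R)"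
proof -
  have "hom_cycles L S R \<subseteq> {..<L} \<rightarrow>\<^sub>E S"
    unfolding hom_cycles_def by blast
  then show ?thesis
    using assms by (metis finite_PiE finite_lessThan finite_subset)
qed

lemma overlapping_cycle_gap_pair:
  assumes f: "f \<in> hom_cycles L S R" and disjoint: "\<And>x y. R x y \<Longrightarrow> x \<inter> y = {}"
    and "i < L" "j < L" "i \<noteq> j" "w \<in> f i" "w \<in> f j"
  shows "\<exists>(a, b)\<in>cyclic_gap_pairs L. w \<in> f a \<and> w \<in> f b"
proof -
  define a where "a = min i j"
  define b where "b = max i j"
  have ab: "a < b" "b < L" "w \<in> f a" "w \<in> f b"
    using assms(3-7) unfolding a_def b_def by (auto simp: min_def max_def)
  have edge: "R (f t) (f (Suc t mod L))" if "t < L" for t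
    using f that unfolding hom_cycles_def by blast
  have "b \<noteq> Suc a"
  proof
    assume "b = Suc a"
    then have "R (f a) (f b)"
      using edge[of a] ab by simp
    then show False
      using disjoint ab by blast
  qed
  moreover have "\<not> (a = 0 \<and> b = L - 1)"
  proof
    assume "a = 0 \<and> b = L - 1"
    then have "R (f b) (f a)"
      using edge[of b] ab by simp
    then show False
      using disjoint ab by blast
  qed
  ultimately have "(a, b) \<in> cyclic_gap_pairs L"
    using ab unfolding cyclic_gap_pairs_def by auto
  then show ?thesis
    using ab by blast
qed

lemma card_overlapping_cycles_le:
  assumes "finite S" "finite U" "S \<subseteq> Pow U"
    and disjoint: "\<And>x y. R x y \<Longrightarrow> x \<inter> y = {}"
  shows "card {f \<in> hom_cycles L S R. \<exists>i<L. \<exists>j<L. i \<noteq> j \<and> f i \<inter> f j \<noteq> {}}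
    \<le> (\<Sum>(i, j)\<in>cyclic_gap_pairs L. \<Sum>v\<in>U. card {f \<in> hom_cycles L S R. v \<in> f i \<and> v \<in> f j})"
proof -
  let ?C = "\<lambda>i j v. {f \<in> hom_cycles L S R. v \<in> f i \<and> v \<in> f j}"
  have "{f \<in> hom_cycles L S R. \<exists>i<L. \<exists>j<L. i \<noteq> j \<and> f i \<inter> f j \<noteq> {}}
      \<subseteq> (\<Union>(i, j)\<in>cyclic_gap_pairs L. \<Union>v\<in>U. ?C i j v)"
  proof
    fix f assume "f \<in> {f \<in> hom_cycles L S R. \<exists>i<L. \<exists>j<L. i \<noteq> j \<and> f i \<inter> f j \<noteq> {}}"
    then obtain i j w where f: "f \<in> hom_cycles L S R" and "i < L" "j < L" "i \<noteq> j" "w \<in> f i" "w \<in> f j"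
      by blast
    then obtain a b where "(a, b) \<in> cyclic_gap_pairs L" "w \<in> f a" "w \<in> f b"
      using overlapping_cycle_gap_pair[OF f disjoint] by blast
    moreover have "w \<in> U"
      using f \<open>i < L\<close> \<open>w \<in> f i\<close> assms(3) unfolding hom_cycles_def by blast
    ultimately show "f \<in> (\<Union>(i, j)\<in>cyclic_gap_pairs L. \<Union>v\<in>U. ?C i j v)"
      using f by blast
  qed
  moreover have "finite (\<Union>(i, j)\<in>cyclic_gap_pairs L. \<Union>v\<in>U. ?C i j v)"
    by (rule finite_subset[OF _ finite_hom_cycles[OF assms(1)]]) auto
  ultimately have "card {f \<in> hom_cycles L S R. \<exists>i<L. \<exists>j<L. i \<noteq> j \<and> f i \<inter> f j \<noteq> {}}
      \<le> card (\<Union>(i, j)\<in>cyclic_gap_pairs L. \<Union>v\<in>U. ?C i j v)"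
    by (intro card_mono)
  also have "\<dots> \<le> (\<Sum>(i, j)\<in>cyclic_gap_pairs L. card (\<Union>v\<in>U. ?C i j v))"
    using card_UN_le[OF finite_cyclic_gap_pairs, of "\<lambda>(i, j). \<Union>v\<in>U. ?C i j v"]
    by (simp add: case_prod_unfold)
  also have "\<dots> \<le> (\<Sum>(i, j)\<in>cyclic_gap_pairs L. \<Sum>v\<in>U. card (?C i j v))"
    using \<open>finite U\<close> by (intro sum_mono) (auto intro: card_UN_le)
  finally show ?thesis .
qed

locale graph_on = matrices_on S for S :: "'b set" +
  fixes R :: "'b \<Rightarrow> 'b \<Rightarrow> bool"
  assumes R_in_S: "R x y \<Longrightarrow> x \<in> S \<and> y \<in> S"
    and R_sym: "R x y \<Longrightarrow> R y x"
begin

sublocale symmetric_matrix S "adj_mat R"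
  by unfold_locales (auto simp: supported_def transpose_mat_def adj_mat_def fun_eq_iff dest: R_in_S R_sym)

lemma card_marked_cycles_eq_tr:
  assumes "1 \<le> L" "T \<subseteq> {..<L}"
    and weights: "\<And>t x y. t < L \<Longrightarrow> x \<in> S \<Longrightarrow> y \<in> S \<Longrightarrow> c t x y = of_bool (R x y \<and> (t \<in> T \<longrightarrow> p x))"
  shows "real (card {f \<in> hom_cycles L S R. \<forall>t\<in>T. p (f t)}) = tr (mprod (map c [0..<L]))"
proof -
  have "tr (mprod (map c [0..<L])) = (\<Sum>f\<in>{..<L} \<rightarrow>\<^sub>E S. \<Prod>t<L. c t (f t) (f (Suc t mod L)))"
    by (rule tr_mprod_cycle_sum[OF assms(1)])
  also have "\<dots> = (\<Sum>f\<in>{..<L} \<rightarrow>\<^sub>E S. of_bool (f \<in> hom_cycles L S R \<and> (\<forall>t\<in>T. p (f t))))"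
  proof (intro sum.cong refl)
    fix f assume f: "f \<in> {..<L} \<rightarrow>\<^sub>E S"
    have "f t \<in> S" "f (Suc t mod L) \<in> S" if "t < L" for t
      using that assms(1) by (auto intro: PiE_mem[OF f])
    then have "(\<Prod>t<L. c t (f t) (f (Suc t mod L))) = (\<Prod>t<L. of_bool (R (f t) (f (Suc t mod L)) \<and> (t \<in> T \<longrightarrow> p (f t))))"
      by (intro prod.cong refl weights) simp_all
    also have "\<dots> = of_bool (f \<in> hom_cycles L S R \<and> (\<forall>t\<in>T. p (f t)))"
      using f assms(2) by (auto simp: prod_of_bool hom_cycles_def)
    finally show "(\<Prod>t<L. c t (f t) (f (Suc t mod L))) = of_bool (f \<in> hom_cycles L S R \<and> (\<forall>t\<in>T. p (f t)))" .
  qed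
  also have "\<dots> = real (card (({..<L} \<rightarrow>\<^sub>E S) \<inter> {f. f \<in> hom_cycles L S R \<and> (\<forall>t\<in>T. p (f t))}))"
    using finite_S by (simp add: finite_PiE)
  also have "({..<L} \<rightarrow>\<^sub>E S) \<inter> {f. f \<in> hom_cycles L S R \<and> (\<forall>t\<in>T. p (f t))} = {f \<in> hom_cycles L S R. \<forall>t\<in>T. p (f t)}"
    by (auto simp: hom_cycles_def)
  finally show ?thesis ..
qed

lemma hom_C_eq_tr: "1 \<le> L \<Longrightarrow> real (hom_C L S R) = tr (mpow (adj_mat R) L)"
  using card_marked_cycles_eq_tr[of L "{}" "\<lambda>_. adj_mat R"]
  by (simp add: hom_C_def adj_mat_def map_replicate_const mprod_replicate)

lemma card_cycles_pair_eq_tr: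
  assumes "i < j" "j < L" "2 \<le> j - i" "j - i + 2 \<le> L"
  shows "real (card {f \<in> hom_cycles L S R. p (f i) \<and> p (f j)})
     = tr (sandwich p \<odot> mpow (adj_mat R) (j - i - 2) \<odot> sandwich p \<odot> mpow (adj_mat R) (L - (j - i) - 2))"
proof -
  have "{f \<in> hom_cycles L S R. p (f i) \<and> p (f j)} = {f \<in> hom_cycles L S R. \<forall>t\<in>{i, j}. p (f t)}"
    by auto
  also have "real (card \<dots>) = tr (mprod (map (\<lambda>t. if t = i \<or> t = j then diag_mat p \<odot> adj_mat R else adj_mat R) [0..<L]))"
    using assms by (intro card_marked_cycles_eq_tr) (auto simp: diag_mmult adj_mat_def)
  finally show ?thesis
    unfolding tr_two_marks[OF assms] .
qed

lemma tr_adj_square: "tr (mpow (adj_mat R) 2) = (\<Sum>x\<in>S. real (card {y \<in> S. R x y}))"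
proof -
  have "mpow (adj_mat R) 2 = adj_mat R \<odot> adj_mat R"
    by (simp add: numeral_2_eq_2 supported_A)
  then have "tr (mpow (adj_mat R) 2) = (\<Sum>x\<in>S. \<Sum>y\<in>S. of_bool (R x y))"
    unfolding tr_def by (auto simp: mmult_def adj_mat_def intro!: sum.cong dest: R_sym)
  then show ?thesis
    using finite_S by (simp add: Int_def)
qed

lemma adj_mat_schur_sum:
  "(\<Sum>x\<in>S. adj_mat R x z * (\<Sum>z'\<in>S. if p z' then adj_mat R x z' else 0))
     = (\<Sum>x | x \<in> S \<and> R x z. real (card {z' \<in> S. R x z' \<and> p z'}))"
proof -
  have "(\<Sum>z'\<in>S. if p z' then adj_mat R x z' else 0) = (\<Sum>z'\<in>S. of_bool (R x z' \<and> p z'))" for x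
    by (intro sum.cong) (auto simp: adj_mat_def)
  also have "(\<Sum>z'\<in>S. of_bool (R x z' \<and> p z')) = real (card {z' \<in> S. R x z' \<and> p z'})" for x
    using finite_S by (simp add: Int_def)
  finally have "(\<Sum>z'\<in>S. if p z' then adj_mat R x z' else 0) = real (card {z' \<in> S. R x z' \<and> p z'})" for x .
  then show ?thesis
    using finite_S by (simp add: adj_mat_def Int_def)
qed

lemma sum_card_cycles_pair_le:
  fixes P :: "'v \<Rightarrow> 'b \<Rightarrow> bool"
  assumes "finite U"
    and members: "\<And>x. x \<in> S \<Longrightarrow> card {v \<in> U. P v x} = r"
    and schur: "\<And>v z. z \<in> S \<Longrightarrow> P v z \<Longrightarrow> (\<Sum>x | x \<in> S \<and> R x z. real (card {z' \<in> S. R x z' \<and> P v z'})) \<le> \<Lambda>"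
    and ij: "i < j" "j < 2 * k" "2 \<le> j - i" "j - i + 2 \<le> 2 * k"
  shows "(\<Sum>v\<in>U. real (card {f \<in> hom_cycles (2 * k) S R. P v (f i) \<and> P v (f j)}))
     \<le> real r * \<Lambda> * tr (mpow (adj_mat R) (2 * (k - 1)))"
proof -
  have "(\<Sum>v\<in>U. real (card {f \<in> hom_cycles (2 * k) S R. P v (f i) \<and> P v (f j)}))
      = pair_trace U P (j - i - 2) (2 * (k - 2) - (j - i - 2))"
    unfolding pair_trace_def card_cycles_pair_eq_tr[OF ij]
    using ij by (intro sum.cong refl) (simp add: diff_mult_distrib2)
  also have "\<dots> \<le> pair_trace U P 0 (2 * (k - 2))"
    using ij by (intro pair_trace_le_corner) simp
  also have "\<dots> \<le> (\<Sum>v\<in>U. \<Lambda> * tr (sandwich (P v) \<odot> mpow (adj_mat R) (2 * (k - 2))))"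
    unfolding pair_trace_zero
  proof (intro sum_mono tr_sandwich_square_le)
    show "0 \<le> adj_mat R x y" for x y
      by (simp add: adj_mat_def)
    show "(\<Sum>x\<in>S. adj_mat R x z * (\<Sum>z'\<in>S. if P v z' then adj_mat R x z' else 0)) \<le> \<Lambda>"
      if "z \<in> S" "P v z" for v z
      unfolding adj_mat_schur_sum using schur that .
  qed
  also have "\<dots> = \<Lambda> * (real r * tr (mpow (adj_mat R) (2 * (k - 2) + 2)))"
    by (simp add: sum_distrib_left[symmetric] sum_tr_sandwich_mpow[OF \<open>finite U\<close> members])
  also have "2 * (k - 2) + 2 = 2 * (k - 1)"
    using ij by simp
  finally show ?thesis
    by (simp add: mult_ac)
qed

lemma sum_gap_pairs_card_cycles_le:
  fixes P :: "'v \<Rightarrow> 'b \<Rightarrow> bool"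
  assumes "finite U" "0 \<le> \<Lambda>"
    and members: "\<And>x. x \<in> S \<Longrightarrow> card {v \<in> U. P v x} = r"
    and schur: "\<And>v z. z \<in> S \<Longrightarrow> P v z \<Longrightarrow> (\<Sum>x | x \<in> S \<and> R x z. real (card {z' \<in> S. R x z' \<and> P v z'})) \<le> \<Lambda>"
  shows "(\<Sum>(i, j)\<in>cyclic_gap_pairs (2 * k). \<Sum>v\<in>U. real (card {f \<in> hom_cycles (2 * k) S R. P v (f i) \<and> P v (f j)}))
     \<le> 4 * real k ^ 2 * real r * \<Lambda> * tr (mpow (adj_mat R) (2 * (k - 1)))"
proof -
  let ?W = "real r * \<Lambda> * tr (mpow (adj_mat R) (2 * (k - 1)))"
  have "(\<Sum>(i, j)\<in>cyclic_gap_pairs (2 * k). \<Sum>v\<in>U. real (card {f \<in> hom_cycles (2 * k) S R. P v (f i) \<and> P v (f j)}))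
      \<le> (\<Sum>(i, j)\<in>cyclic_gap_pairs (2 * k). ?W)"
  proof (rule sum_mono)
    fix ij assume "ij \<in> cyclic_gap_pairs (2 * k)"
    then obtain i j where "ij = (i, j)" "i < j" "j < 2 * k" "2 \<le> j - i" "j - i + 2 \<le> 2 * k"
      unfolding cyclic_gap_pairs_def by auto
    then show "(case ij of (i, j) \<Rightarrow> \<Sum>v\<in>U. real (card {f \<in> hom_cycles (2 * k) S R. P v (f i) \<and> P v (f j)})) \<le> (case ij of (i, j) \<Rightarrow> ?W)"
      using sum_card_cycles_pair_le[OF assms(1) members schur] by simp
  qed
  also have "\<dots> = real (card (cyclic_gap_pairs (2 * k))) * ?W"
    by (simp add: case_prod_unfold)
  also have "\<dots> \<le> real (2 * k * (2 * k)) * ?W"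
  proof (rule mult_right_mono)
    show "real (card (cyclic_gap_pairs (2 * k))) \<le> real (2 * k * (2 * k))"
      using card_cyclic_gap_pairs_le by (simp only: of_nat_le_iff)
    show "0 \<le> ?W"
      using tr_mpow_even_nonneg \<open>0 \<le> \<Lambda>\<close> by simp
  qed
  finally show ?thesis
    by (simp add: power2_eq_square mult_ac)
qed

end

section \<open>The auxiliary graph\<close>

lemma binomial_pred_le_powr:
  assumes "1 \<le> s" "1 \<le> r"
  shows "real ((s - 1) choose (r - 1)) \<le> real r * real (s choose r) powr (1 - 1 / real r)"
proof -
  have key: "real s * real ((s - 1) choose (r - 1)) = real (s choose r) * real r"
    using Suc_times_binomial_eq[of "s - 1" "r - 1"] assms by (simp flip: of_nat_mult)
  show ?thesis
  proof (cases "r \<le> s")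
    case False
    then show ?thesis
      using assms by (simp add: binomial_eq_0)
  next
    case True
    define C where "C = real (s choose r)"
    have "0 < C"
      using True unfolding C_def by simp
    have "C \<le> real s ^ r"
      unfolding C_def using binomial_le_pow[OF True] by (simp flip: of_nat_power)
    then have "C powr (1 / real r) \<le> (real s ^ r) powr (1 / real r)"
      using \<open>0 < C\<close> by (intro powr_mono2) auto
    also have "\<dots> = real s"
      using assms by (simp add: powr_realpow[symmetric] powr_powr)
    finally have root_le: "C powr (1 / real r) \<le> real s" .
    have "real ((s - 1) choose (r - 1)) = real r * C / real s"
      using key assms unfolding C_def by (simp add: field_simps)
    also have "\<dots> \<le> real r * C / C powr (1 / real r)"
      using root_le \<open>0 < C\<close> assms by (intro divide_left_mono mult_pos_pos) auto
    also have "\<dots> = real r * C powr (1 - 1 / real r)"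
      using \<open>0 < C\<close> by (simp add: powr_diff)
    finally show ?thesis
      unfolding C_def .
  qed
qed

lemma card_subgraph_nbrs_le_degree:
  assumes "subgraph VH EH V E" "finite V"
  shows "card {y \<in> VH. EH x y} \<le> degree V E x"
  unfolding degree_def using assms by (intro card_mono) (auto simp: subgraph_def)

lemma card_subsets_containing:
  assumes "finite N" "v \<in> N" "1 \<le> r"
  shows "card {z. z \<subseteq> N \<and> card z = r \<and> v \<in> z} = (card N - 1) choose (r - 1)"
proof -
  have "{z. z \<subseteq> N \<and> card z = r \<and> v \<in> z} = insert v ` {z. z \<subseteq> N - {v} \<and> card z = r - 1}"
  proof (intro equalityI subsetI)
    fix z assume "z \<in> {z. z \<subseteq> N \<and> card z = r \<and> v \<in> z}"
    then have "z = insert v (z - {v})" "z - {v} \<in> {z. z \<subseteq> N - {v} \<and> card z = r - 1}"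
      using \<open>finite N\<close> finite_subset by (auto simp: card_Diff_singleton)
    then show "z \<in> insert v ` {z. z \<subseteq> N - {v} \<and> card z = r - 1}"
      by blast
  next
    fix z assume "z \<in> insert v ` {z. z \<subseteq> N - {v} \<and> card z = r - 1}"
    then obtain z' where "z = insert v z'" "z' \<subseteq> N - {v}" "card z' = r - 1"
      by blast
    moreover have "finite z'" "v \<notin> z'"
      using \<open>z' \<subseteq> N - {v}\<close> \<open>finite N\<close> finite_subset by blast+
    ultimately show "z \<in> {z. z \<subseteq> N \<and> card z = r \<and> v \<in> z}"
      using assms by auto
  qed
  moreover have "inj_on (insert v) {z. z \<subseteq> N - {v} \<and> card z = r - 1}"
    by (rule inj_onI) (metis Diff_insert_absorb Diff_iff mem_Collect_eq singletonI subsetD)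
  ultimately show ?thesis
    using n_subsets[of "N - {v}"] assms by (simp add: card_image)
qed

lemma card_aux_nbrs_containing_le:
  assumes "simple_graph V E" "1 \<le> r" "x \<in> aux_verts V r"
  shows "real (card {z \<in> aux_verts V r. aux_adj E x z \<and> v \<in> z})
       \<le> real r * real (degree (aux_verts V r) (aux_adj E) x) powr (1 - 1 / real r)"
proof -
  define N where "N = {u \<in> V. \<forall>a\<in>x. E a u}"
  have "finite N"
    using assms(1) unfolding N_def simple_graph_def by simp
  have nbrs: "{z \<in> aux_verts V r. aux_adj E x z} = {z. z \<subseteq> N \<and> card z = r}"
    using assms(1) unfolding aux_verts_def aux_adj_def N_def simple_graph_def by blast
  have degree: "degree (aux_verts V r) (aux_adj E) x = card N choose r"
    unfolding degree_def nbrs using n_subsets[OF \<open>finite N\<close>] .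
  have nbrs_containing: "{z \<in> aux_verts V r. aux_adj E x z \<and> v \<in> z} = {z. z \<subseteq> N \<and> card z = r \<and> v \<in> z}"
    using nbrs by blast
  show ?thesis
  proof (cases "v \<in> N")
    case False
    then have no_nbrs: "{z. z \<subseteq> N \<and> card z = r \<and> v \<in> z} = {}"
      by blast
    show ?thesis
      unfolding nbrs_containing no_nbrs by simp
  next
    case True
    then have "1 \<le> card N"
      using \<open>finite N\<close> by (metis One_nat_def Suc_leI card_gt_0_iff empty_iff)
    then show ?thesis
      unfolding nbrs_containing card_subsets_containing[OF \<open>finite N\<close> True assms(2)] degree
      using binomial_pred_le_powr assms(2) by simp
  qed
qed

locale aux_bipartite_subgraph =
  fixes V :: "'a set" and E :: "'a \<Rightarrow> 'a \<Rightarrow> bool" and r :: nat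
    and VH X1 X2 :: "'a set set" and EH :: "'a set \<Rightarrow> 'a set \<Rightarrow> bool" and D1 D2 :: real
  assumes r_pos: "1 \<le> r"
    and simple: "simple_graph V E"
    and sub: "subgraph VH EH (aux_verts V r) (aux_adj E)"
    and bip: "bipartite_parts VH EH X1 X2"
    and deg1: "\<forall>x\<in>X1. real (degree (aux_verts V r) (aux_adj E) x) \<le> D1"
    and deg2: "\<forall>x\<in>X2. real (degree (aux_verts V r) (aux_adj E) x) \<le> D2"
    and D1_nonneg: "0 \<le> D1"
    and D1_le_D2: "D1 \<le> D2"
begin

lemma finite_V: "finite V"
  using simple by (simp add: simple_graph_def)

lemma finite_aux_verts: "finite (aux_verts V r)"
  using finite_V finite_subset[of "aux_verts V r" "Pow V"] by (auto simp: aux_verts_def)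

lemma VH_subset: "VH \<subseteq> aux_verts V r"
  using sub by (simp add: subgraph_def)

lemma finite_VH: "finite VH"
  using VH_subset finite_aux_verts finite_subset by blast

sublocale graph_on VH EH
  using finite_VH sub by unfold_locales (auto simp: subgraph_def)

definition side_bound :: "'a set \<Rightarrow> real" where
  "side_bound x = (if x \<in> X1 then D1 else D2)"

lemma degree_le_side_bound: "x \<in> VH \<Longrightarrow> real (degree (aux_verts V r) (aux_adj E) x) \<le> side_bound x"
  using deg1 deg2 bip unfolding side_bound_def bipartite_parts_def by auto

lemma card_nbrs_le_side_bound: "x \<in> VH \<Longrightarrow> real (card {y \<in> VH. EH x y}) \<le> side_bound x"
  using card_subgraph_nbrs_le_degree[OF sub finite_aux_verts, of x] degree_le_side_bound[of x]
  by linarith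

lemma card_nbrs_containing_le:
  assumes "x \<in> VH"
  shows "real (card {z \<in> VH. EH x z \<and> v \<in> z}) \<le> real r * side_bound x powr (1 - 1 / real r)"
proof -
  have "card {z \<in> VH. EH x z \<and> v \<in> z} \<le> card {z \<in> aux_verts V r. aux_adj E x z \<and> v \<in> z}"
    using sub finite_aux_verts by (intro card_mono) (auto simp: subgraph_def)
  then have "real (card {z \<in> VH. EH x z \<and> v \<in> z}) \<le> real (card {z \<in> aux_verts V r. aux_adj E x z \<and> v \<in> z})"
    by (rule of_nat_mono)
  also have "\<dots> \<le> real r * real (degree (aux_verts V r) (aux_adj E) x) powr (1 - 1 / real r)"
    using card_aux_nbrs_containing_le[OF simple r_pos] assms VH_subset by blast
  also have "\<dots> \<le> real r * side_bound x powr (1 - 1 / real r)"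
    using degree_le_side_bound[OF assms] r_pos by (intro mult_left_mono powr_mono2) auto
  finally show ?thesis .
qed

lemma schur_bound:
  assumes "z \<in> VH"
  shows "(\<Sum>x | x \<in> VH \<and> EH x z. real (card {z' \<in> VH. EH x z' \<and> v \<in> z'}))
       \<le> real r * (D1 powr (1 - 1 / real r) * D2)"
proof -
  define q where "q = 1 - 1 / real r"
  define D' where "D' = (if z \<in> X1 then D2 else D1)"
  have side: "side_bound x = D'" if "EH x z" for x
    using bip that unfolding side_bound_def D'_def bipartite_parts_def by auto
  have "card {x \<in> VH. EH x z} = card {x \<in> VH. EH z x}"
    using sub unfolding subgraph_def by metis
  then have card_le: "real (card {x \<in> VH. EH x z}) \<le> side_bound z"
    using card_nbrs_le_side_bound[OF assms] by simp
  have "(\<Sum>x | x \<in> VH \<and> EH x z. real (card {z' \<in> VH. EH x z' \<and> v \<in> z'}))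
      \<le> (\<Sum>x | x \<in> VH \<and> EH x z. real r * D' powr q)"
    unfolding q_def by (intro sum_mono) (metis (mono_tags) card_nbrs_containing_le mem_Collect_eq side)
  also have "\<dots> = real r * (real (card {x \<in> VH. EH x z}) * D' powr q)"
    by simp
  also have "\<dots> \<le> real r * (side_bound z * D' powr q)"
    using card_le by (intro mult_left_mono mult_right_mono) auto
  also have "side_bound z * D' powr q \<le> D1 powr q * D2"
    using mult_powr_swap_le[OF D1_nonneg D1_le_D2, of q] r_pos
    unfolding side_bound_def D'_def q_def by (auto simp: mult.commute)
  finally show ?thesis
    unfolding q_def by (simp add: mult_left_mono)
qed

lemma card_overlapping_cycles_le_tr:
  "real (card {f \<in> hom_cycles (2 * k) VH EH. \<exists>i<2 * k. \<exists>j<2 * k. i \<noteq> j \<and> f i \<inter> f j \<noteq> {}})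
     \<le> 4 * real k ^ 2 * real r * (real r * (D1 powr (1 - 1 / real r) * D2))
         * tr (mpow (adj_mat EH) (2 * (k - 1)))"
proof -
  have "VH \<subseteq> Pow V"
    using VH_subset by (auto simp: aux_verts_def)
  then have "card {f \<in> hom_cycles (2 * k) VH EH. \<exists>i<2 * k. \<exists>j<2 * k. i \<noteq> j \<and> f i \<inter> f j \<noteq> {}}
      \<le> (\<Sum>(i, j)\<in>cyclic_gap_pairs (2 * k). \<Sum>v\<in>V. card {f \<in> hom_cycles (2 * k) VH EH. v \<in> f i \<and> v \<in> f j})"
    using finite_VH finite_V sub by (intro card_overlapping_cycles_le) (auto simp: subgraph_def aux_adj_def)
  then have "real (card {f \<in> hom_cycles (2 * k) VH EH. \<exists>i<2 * k. \<exists>j<2 * k. i \<noteq> j \<and> f i \<inter> f j \<noteq> {}})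
      \<le> real (\<Sum>(i, j)\<in>cyclic_gap_pairs (2 * k). \<Sum>v\<in>V. card {f \<in> hom_cycles (2 * k) VH EH. v \<in> f i \<and> v \<in> f j})"
    by (simp only: of_nat_le_iff)
  also have "\<dots> = (\<Sum>(i, j)\<in>cyclic_gap_pairs (2 * k). \<Sum>v\<in>V. real (card {f \<in> hom_cycles (2 * k) VH EH. v \<in> f i \<and> v \<in> f j}))"
    by (simp add: case_prod_unfold)
  also have "\<dots> \<le> 4 * real k ^ 2 * real r * (real r * (D1 powr (1 - 1 / real r) * D2))
         * tr (mpow (adj_mat EH) (2 * (k - 1)))"
  proof (rule sum_gap_pairs_card_cycles_le[OF finite_V])
    show "card {v \<in> V. v \<in> x} = r" if "x \<in> VH" for x
    proof -
      have "x \<subseteq> V" "card x = r"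
        using that VH_subset by (auto simp: aux_verts_def)
      then show ?thesis
        by (simp add: Collect_conj_eq Int_absorb1 Collect_mem_eq)
    qed
  qed (use D1_nonneg D1_le_D2 schur_bound in auto)
  finally show ?thesis .
qed

lemma tr_adj_square_le: "tr (mpow (adj_mat EH) 2) \<le> real (card VH) * D2"
proof -
  have "tr (mpow (adj_mat EH) 2) = (\<Sum>x\<in>VH. real (card {y \<in> VH. EH x y}))"
    by (rule tr_adj_square)
  also have "\<dots> \<le> (\<Sum>x\<in>VH. D2)"
  proof (rule sum_mono)
    fix x assume "x \<in> VH"
    have "side_bound x \<le> D2"
      using D1_le_D2 unfolding side_bound_def by simp
    then show "real (card {y \<in> VH. EH x y}) \<le> D2"
      using card_nbrs_le_side_bound[OF \<open>x \<in> VH\<close>] by linarith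
  qed
  finally show ?thesis
    by simp
qed

lemma tr_mpow_interpolation_card:
  "1 \<le> k \<Longrightarrow> tr (mpow (adj_mat EH) (2 * (k - 1))) ^ k \<le> real (card VH) * tr (mpow (adj_mat EH) (2 * k)) ^ (k - 1)"
  using tr_mpow_interpolation[of 0 k] by (simp add: tr_one)

lemma tr_mpow_interpolation_D2:
  assumes "2 \<le> k"
  shows "tr (mpow (adj_mat EH) (2 * (k - 1))) ^ (k - 1) \<le> real (card VH) * D2 * tr (mpow (adj_mat EH) (2 * k)) ^ (k - 2)"
proof -
  have "tr (mpow (adj_mat EH) (2 * (k - 1))) ^ (k - 1) \<le> tr (mpow (adj_mat EH) 2) * tr (mpow (adj_mat EH) (2 * k)) ^ (k - 2)"
    using tr_mpow_interpolation[of 1 k] assms by (simp add: numeral_2_eq_2)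
  also have "\<dots> \<le> real (card VH) * D2 * tr (mpow (adj_mat EH) (2 * k)) ^ (k - 2)"
    using tr_adj_square_le tr_mpow_even_nonneg[of k] by (intro mult_right_mono) simp_all
  finally show ?thesis .
qed

end

theorem lemma5p3:
  fixes V :: "'a set" and E :: "'a \<Rightarrow> 'a \<Rightarrow> bool"
    and r k :: nat
    and VH X1 X2 :: "'a set set" and EH :: "'a set \<Rightarrow> 'a set \<Rightarrow> bool"
    and D1 D2 :: real and m :: nat
  assumes "r \<ge> 1" and "k \<ge> 2"
    and "simple_graph V E"
    and "subgraph VH EH (aux_verts V r) (aux_adj E)"
    and "bipartite_parts VH EH X1 X2"
    and "m = card VH"
    and "\<forall>x\<in>X1. real (degree (aux_verts V r) (aux_adj E) x) \<le> D1"
    and "\<forall>x\<in>X2. real (degree (aux_verts V r) (aux_adj E) x) \<le> D2"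
    and "0 \<le> D1" and "D1 \<le> D2"
  defines "B \<equiv> card {f \<in> hom_cycles (2*k) VH EH.
                   \<exists>i<2*k. \<exists>j<2*k. i \<noteq> j \<and> f i \<inter> f j \<noteq> {}}"
    and "H \<equiv> real (hom_C (2*k) VH EH)"
    and "c \<equiv> 32 * real k powr (3/2) * real r powr ((real r + 1) / 2)
              * (D1 powr (1 - 1 / real r) * D2) powr (1/2)"
  shows "real B \<le> c * real m powr (1 / (2 * real k)) * H powr (1 - 1 / (2 * real k))
       \<and> real B \<le> c * (real m * D2) powr (1 / (2 * real k - 2))
                   * H powr (1 - 1 / (2 * real k - 2))"
proof -
  interpret aux_bipartite_subgraph V E r VH X1 X2 EH D1 D2
    using assms by unfold_locales auto
  define W where "W = tr (mpow (adj_mat EH) (2 * (k - 1)))"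
  have H: "H = tr (mpow (adj_mat EH) (2 * k))"
    unfolding H_def using assms(2) by (intro hom_C_eq_tr) simp
  have B_H: "real B \<le> H"
    unfolding B_def H_def hom_C_def using finite_hom_cycles[OF finite_VH] by (intro of_nat_mono card_mono) auto
  have B_W: "real B \<le> 4 * real k ^ 2 * real r * (real r * (D1 powr (1 - 1 / real r) * D2)) * W"
    unfolding B_def W_def by (rule card_overlapping_cycles_le_tr)
  have constant_bound: "4 * real k ^ 2 * real r * (real r * (D1 powr (1 - 1 / real r) * D2)) \<le> c\<^sup>2"
    using overlap_constant_le[of k r "D1 powr (1 - 1 / real r) * D2"] assms(1,2,9,10)
    unfolding c_def by (simp add: power2_eq_square mult_ac)
  have "0 \<le> W" "0 \<le> c" "0 \<le> D2"
    unfolding W_def c_def using tr_mpow_even_nonneg assms(9,10) by simp_all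
  have interpolation_m: "W ^ k \<le> real m * H ^ (k - 1)"
    using tr_mpow_interpolation_card[of k] assms(2,6) by (simp add: W_def H)
  have interpolation_D2: "W ^ (k - 1) \<le> real m * D2 * H ^ (k - 1 - 1)"
    using tr_mpow_interpolation_D2[OF assms(2)] assms(6) by (simp add: W_def H numeral_2_eq_2)
  have "real B \<le> c * real m powr (1 / (2 * real k)) * H powr (1 - 1 / (2 * real k))"
    by (rule geometric_mean_bound[OF _ B_H B_W \<open>0 \<le> W\<close> _ _ interpolation_m constant_bound \<open>0 \<le> c\<close>])
      (use assms(2) in simp_all)
  moreover have "real B \<le> c * (real m * D2) powr (1 / (2 * real (k - 1))) * H powr (1 - 1 / (2 * real (k - 1)))"
    by (rule geometric_mean_bound[OF _ B_H B_W \<open>0 \<le> W\<close> _ _ interpolation_D2 constant_bound \<open>0 \<le> c\<close>])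
      (use assms(2) \<open>0 \<le> D2\<close> in simp_all)
  moreover have "2 * real (k - 1) = 2 * real k - 2"
    using assms(2) by (simp add: of_nat_diff)
  ultimately show ?thesis
    by simp
qed

end
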